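(* Let $G$ be a finite simple graph with edge ideal $I=I(G)$, fix a total order $L_1>L_2>\dots>L_k$ on the edges (minimal monomial generators) of $I$, and for each $n\geq 1$ let $L^{(n)}_1>L^{(n)}_2>\cdots$ be the minimal monomial generators of $I^n$ in the order described in the context. Then for every $n\geq1$, every $k'\geq1$ and every $j\leq k'$: if $(L^{(n)}_j : L^{(n)}_{k'+1})$ is not contained in $(I^{n+1}:L^{(n)}_{k'+1})$ and $L^{(n)}_j$ belongs to an edge that comes (strictly) before the edge that $L^{(n)}_{k'+1}$ belongs to, then there exists $i\leq k'$ such that $(L^{(n)}_i : L^{(n)}_{k'+1})$ is generated by a single variable, $(L^{(n)}_j : L^{(n)}_{k'+1})\subseteq (L^{(n)}_i : L^{(n)}_{k'+1})$, and $L^{(n)}_i$ belongs to an edge that comes before or is equal to the edge that $L^{(n)}_j$ belongs to.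
   Context: $S=K[\,x : x\in V(G)\,]$ is the polynomial ring over a field $K$ on the vertices and $I(G)=(xy : xy\text{ an edge})$. For monomials $m,m'$, $(m:m')$ denotes $((m):(m'))$. Ordering: each minimal monomial generator $M$ of $I^n$ can be written as $L_1^{a_1}\cdots L_k^{a_k}$ with $\sum a_i=n$; its maximal expression is the lexicographically largest such exponent vector. For minimal generators $M,N$ of $I^n$, $M>N$ iff the maximal expression of $M$ is lexicographically larger than that of $N$; for $n=1$ this is the fixed order. $L^{(n)}_1>L^{(n)}_2>\cdots$ lists all minimal monomial generators of $I^n$ decreasingly. The edge $L_a$ comes before $L_b$ if $a<b$. For $n\geq2$ and monomials $m_1\in\mathrm{Mingens}(I^{p})$, $m_2\in\mathrm{Mingens}(I^n)$ with $n>p$, write $m_1\mid^{\mathrm{edge}} m_2$ if $m_2=m_1m_3$ for some minimal monomial generator $m_3$ of $I^{n-p}$. A minimal generator $m$ of $I^n$, $n\ge2$, belongs to the edge $L_i$ if $i$ is the least index with $L_i\mid^{\mathrm{edge}} m$; for $n=1$, $L_i$ belongs to $L_i$. *)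

theory Defs
  imports Main "HOL-Library.Multiset"
begin

text \<open>Monomials in the variables of type 'v are multisets of variables (exponent vectors);
  product is +, divisibility is the sub-multiset relation.  A monomial ideal is represented
  by the set of monomials it contains (a monomial ideal is determined by, and containment of
  monomial ideals is equivalent to containment of, these sets).  The coefficient field K plays
  no role.  The edges L_1 > L_2 > ... > L_k are given as a list L (L!0 = L_1, etc.).\<close>

definition edge_list :: "'v multiset list \<Rightarrow> bool" where
  "edge_list L \<longleftrightarrow> distinct L \<and> (\<forall>e\<in>set L. \<exists>x y. x \<noteq> y \<and> e = {#x, y#})"

definition principal :: "'v multiset \<Rightarrow> 'v multiset set" where
  "principal m = {u. m \<subseteq># u}"

definition colon :: "'v multiset set \<Rightarrow> 'v multiset \<Rightarrow> 'v multiset set" where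
  "colon J m = {u. u + m \<in> J}"

text \<open>products of n edges; these are the minimal monomial generators of I^n
  (all have degree 2n)\<close>
definition mingens :: "'v multiset list \<Rightarrow> nat \<Rightarrow> 'v multiset set" where
  "mingens L n = {sum_mset (image_mset (\<lambda>i. L ! i) A) | A.
      size A = n \<and> set_mset A \<subseteq> {..<length L}}"

definition powI :: "'v multiset list \<Rightarrow> nat \<Rightarrow> 'v multiset set" where
  "powI L n = {u. \<exists>g\<in>mingens L n. g \<subseteq># u}"

definition exprs :: "'v multiset list \<Rightarrow> 'v multiset \<Rightarrow> nat list set" where
  "exprs L M = {a. length a = length L \<and>
      M = (\<Sum>i<length L. repeat_mset (a ! i) (L ! i))}"

definition lex_gt :: "nat list \<Rightarrow> nat list \<Rightarrow> bool" where
  "lex_gt a b \<longleftrightarrow> length a = length b \<and>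
     (\<exists>i<length a. take i a = take i b \<and> a ! i > b ! i)"

definition maxexpr :: "'v multiset list \<Rightarrow> 'v multiset \<Rightarrow> nat list" where
  "maxexpr L M = (THE a. a \<in> exprs L M \<and> (\<forall>b\<in>exprs L M. b \<noteq> a \<longrightarrow> lex_gt a b))"

definition gen_gt :: "'v multiset list \<Rightarrow> 'v multiset \<Rightarrow> 'v multiset \<Rightarrow> bool" where
  "gen_gt L M N \<longleftrightarrow> lex_gt (maxexpr L M) (maxexpr L N)"

text \<open>gen L n j = L^{(n)}_j, the j-th largest minimal generator of I^n (1-indexed)\<close>
definition gen :: "'v multiset list \<Rightarrow> nat \<Rightarrow> nat \<Rightarrow> 'v multiset" where
  "gen L n j = (THE M. M \<in> mingens L n \<and>
      card {N \<in> mingens L n. gen_gt L N M} = j - 1)"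

definition edge_dvd :: "'v multiset list \<Rightarrow> nat \<Rightarrow> 'v multiset \<Rightarrow> nat \<Rightarrow> 'v multiset \<Rightarrow> bool" where
  "edge_dvd L p m1 n m2 \<longleftrightarrow> (\<exists>m3\<in>mingens L (n - p). m2 = m1 + m3)"

text \<open>index (0-based) of the edge that a minimal generator m of I^n belongs to\<close>
definition edge_of :: "'v multiset list \<Rightarrow> nat \<Rightarrow> 'v multiset \<Rightarrow> nat" where
  "edge_of L n m = (if n = 1 then (THE i. i < length L \<and> L ! i = m)
     else (LEAST i. i < length L \<and> edge_dvd L 1 (L ! i) n m))"

end

theory Submission
  imports Defs "HOL-Library.List_Lexorder"
begin

text \<open>Write N = L^(n)_j and M = L^(n)_(k'+1) as products of multisets S and R of n edges.
  Since lcm(N, M) is not in I^(n+1), no n + 1 edges fit into lcm(N, M); hence every alternating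
  walk of S-edges and R-edges that starts at a vertex u where N has larger degree than M ends at a
  vertex z where M has larger degree than N.  Swapping R along such walks, and re-routing S when
  a walk misses the edge L_a that N belongs to, yields n edges T containing L_a whose product is
  H = M u / z with u dividing N / M.  Then (H : M) = (u) contains (N : M), H belongs to an edge
  not later than L_a, and H > M: some expression of H, hence its maximal one, uses an edge before
  the edge M belongs to, whereas the maximal expression of M uses none of those edges.\<close>

section \<open>Exchanging edges along alternating walks\<close>

lemma size_2_msetE:
  assumes "size r = 2" "p \<in># r"
  obtains w where "r = {#p, w#}"
proof -
  have "size (r - {#p#}) = 1" using assms by (simp add: size_Diff_singleton)
  then obtain w where "r - {#p#} = {#w#}" using size_1_singleton_mset by blast
  then have "r = {#p, w#}" using assms(2) by (metis insert_DiffM)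
  then show thesis by (rule that)
qed

lemma sum_mset_subset_eq_mono: "C \<subseteq># R \<Longrightarrow> sum_mset C \<subseteq># sum_mset (R :: 'a multiset multiset)"
  by (metis subset_mset.add_diff_inverse sum_mset.union mset_subset_eq_add_left)

lemma edge_through_vertex:
  assumes "\<forall>r\<in>#R. size r = 2" "C \<subseteq># R" "count (sum_mset C) p < count (sum_mset R) p"
  obtains w where "add_mset {#p, w#} C \<subseteq># R"
proof -
  have "p \<in># sum_mset (R - C)" using assms(2,3) by (simp add: sum_mset_diff in_diff_count)
  then obtain r where r: "r \<in># R - C" "p \<in># r" by (meson in_Union_mset_iff)
  then have "size r = 2" using assms(1) by (meson in_diffD)
  then obtain w where "r = {#p, w#}" using r(2) by (rule size_2_msetE)
  moreover have "add_mset r C \<subseteq># R" using r(1) assms(2)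
    by (metis add_mset_add_single subset_mset.add_diff_inverse subset_mset.add_le_cancel_left
        mset_subset_eq_single)
  ultimately show thesis using that by blast
qed

lemma size_exchange: "C \<subseteq># R \<Longrightarrow> size (R - C + A) = size R - size C + size A"
  by (simp only: size_union size_Diff_submset)

lemma set_mset_exchange: "A \<subseteq># S \<Longrightarrow> set_mset (R - C + A) \<subseteq> set_mset R \<union> set_mset S"
  by (auto dest: in_diffD mset_subset_eqD)

lemma sum_mset_exchange:
  fixes C R :: "'a multiset multiset"
  assumes "C \<subseteq># R" "sum_mset C + X = sum_mset A + Y"
  shows "sum_mset (R - C + A) + Y = sum_mset R + X"
proof -
  have "sum_mset (R - C + A) + Y = (sum_mset R - sum_mset C) + (sum_mset A + Y)"
    by (simp only: sum_mset.union sum_mset_diff[OF assms(1)] add.assoc)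
  also have "\<dots> = (sum_mset R - sum_mset C) + (sum_mset C + X)"
    using assms(2) by simp
  also have "\<dots> = sum_mset R + X"
    using sum_mset_subset_eq_mono[OF assms(1)] by (simp add: add.assoc[symmetric])
  finally show ?thesis .
qed

text \<open>The S-edges A and the R-edges C form an alternating walk from u whose last edge ends at p.
  If p is covered more often by R than by C, the walk continues along an R-edge \<open>{p, w}\<close> and, unless
  w is deficient in S, along an S-edge at w; otherwise R - C + A is a multiset of |R| + 1 edges inside
  \<open>\<Sum>R \<union># \<Sum>S\<close>.\<close>

lemma alternating_walk:
  fixes R S A C :: "'v multiset multiset"
  assumes edges: "\<forall>r\<in>E. size r = 2" and RE: "set_mset R \<subseteq> E" and SE: "set_mset S \<subseteq> E"
    and no_aug: "\<forall>T. set_mset T \<subseteq> E \<longrightarrow> size T = size R + 1 \<longrightarrow>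
      \<not> sum_mset T \<subseteq># sum_mset R \<union># sum_mset S"
    and heavy: "count (sum_mset R) u < count (sum_mset S) u"
    and "A \<subseteq># S" "C \<subseteq># R" "size A = size C + 1" "sum_mset A = sum_mset C + {#u, p#}"
  shows "\<exists>A C z. A \<subseteq># S \<and> C \<subseteq># R \<and> size A = size C \<and>
    sum_mset A + {#z#} = sum_mset C + {#u#} \<and> count (sum_mset S) z < count (sum_mset R) z"
  using assms(6-9)
proof (induction "size R - size C" arbitrary: A C p rule: less_induct)
  case less
  have R2: "\<forall>r\<in>#R. size r = 2" and S2: "\<forall>r\<in>#S. size r = 2" using edges RE SE by auto
  show ?case
  proof (cases "count (sum_mset C) p < count (sum_mset R) p")
    case True
    then obtain w where C': "add_mset {#p, w#} C \<subseteq># R"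
      using edge_through_vertex[OF R2 less.prems(2)] by blast
    let ?C' = "add_mset {#p, w#} C"
    have step: "sum_mset A + {#w#} = sum_mset ?C' + {#u#}" using less.prems(4) by simp
    show ?thesis
    proof (cases "count (sum_mset S) w < count (sum_mset R) w")
      case True
      then show ?thesis using less.prems(1,3) C' step by fastforce
    next
      case False
      have "count (sum_mset ?C') w \<le> count (sum_mset R) w"
        by (rule mset_subset_eq_count[OF sum_mset_subset_eq_mono[OF C']])
      then have "count (sum_mset A) w < count (sum_mset S) w"
        using arg_cong[OF step, of "\<lambda>X. count X w"] False heavy by (auto split: if_splits)
      then obtain p' where A': "add_mset {#w, p'#} A \<subseteq># S"
        using edge_through_vertex[OF S2 less.prems(1)] by blast
      have shorter: "size R - size ?C' < size R - size C"
        using size_mset_mono[OF C'] by simp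
      have "sum_mset (add_mset {#w, p'#} A) = sum_mset ?C' + {#u, p'#}"
        using step by simp
      from less.hyps[OF shorter A' C' _ this] less.prems(3) show ?thesis by simp
    qed
  next
    case False
    let ?T = "R - C + A"
    have "size ?T = size R + 1"
      using size_exchange[OF less.prems(2)] size_mset_mono[OF less.prems(2)] less.prems(3) by simp
    moreover have "set_mset ?T \<subseteq> E" using set_mset_exchange[OF less.prems(1)] RE SE by blast
    moreover have "sum_mset ?T = sum_mset R + {#u, p#}"
      using sum_mset_exchange[OF less.prems(2), of "{#u, p#}" A "{#}"] less.prems(4) by simp
    moreover have "sum_mset R + {#u, p#} \<subseteq># sum_mset R \<union># sum_mset S"
    proof (subst subseteq_mset_def, intro allI)
      fix q
      have "count (sum_mset A) q \<le> count (sum_mset S) q"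
        by (rule mset_subset_eq_count[OF sum_mset_subset_eq_mono[OF less.prems(1)]])
      then show "count (sum_mset R + {#u, p#}) q \<le> count (sum_mset R \<union># sum_mset S) q"
        using arg_cong[OF less.prems(4), of "\<lambda>X. count X q"] False heavy
        by (auto split: if_splits)
    qed
    ultimately show ?thesis using no_aug by metis
  qed
qed

lemma exists_count_less:
  assumes "size X = size Y" "X \<noteq> Y"
  obtains u where "count Y u < count X u"
proof (rule ccontr)
  assume "\<not> thesis"
  with that have "X \<subseteq># Y" by (meson not_le subseteq_mset_def)
  with assms show False by (metis subset_mset.less_le mset_subset_size less_irrefl)
qed

lemma size_sum_mset_edges:
  "\<forall>r\<in>#X. size r = 2 \<Longrightarrow> size (sum_mset X) = 2 * size (X :: 'a multiset multiset)"
  by (induction X) auto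

lemma diff_eq_singleton:
  assumes "X + {#z#} = Y + {#u#}" "u \<noteq> z"
  shows "X - Y = {#u#}"
  unfolding multiset_eq_iff
proof
  fix q
  have "count X q + (if q = z then 1 else 0) = count Y q + (if q = u then 1 else 0)"
    using arg_cong[OF assms(1), of "\<lambda>M. count M q"] by auto
  then show "count (X - Y) q = count {#u#} q" using assms(2) by (cases "q = u") auto
qed

lemma move_excess_to_deficit:
  assumes moved: "X' + {#u#} = X + {#z#}"
    and "count Y u < count X u" "count X z < count Y z"
  shows "Y \<union># X' \<subseteq># Y \<union># X"
    and "size (X' - Y) < size (X - Y)"
    and "count Y w < count X' w \<Longrightarrow> count Y w < count X w"
proof -
  have count_X': "count X' q = count X q + (if q = z then 1 else 0) - (if q = u then 1 else 0)"
    for q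
    using arg_cong[OF moved, of "\<lambda>M. count M q"] by auto
  show "Y \<union># X' \<subseteq># Y \<union># X"
    unfolding subseteq_mset_def using assms(2,3) by (simp add: count_X')
  have "add_mset u (X' - Y) \<subseteq># X - Y"
    unfolding subseteq_mset_def using assms(2,3) by (auto simp: count_X')
  then show "size (X' - Y) < size (X - Y)" using size_mset_mono by fastforce
  show "count Y w < count X' w \<Longrightarrow> count Y w < count X w"
    using assms(2,3) by (simp add: count_X' split: if_splits)
qed

text \<open>If the walk from a vertex of excess u misses e, re-routing S along it moves one unit of excess
  from u to the deficient end z, which decreases the excess of \<open>\<Sum>S\<close> over \<open>\<Sum>R\<close>.\<close>

lemma exchange_through_edge:
  fixes R S :: "'v multiset multiset"
  assumes edges: "\<forall>r\<in>E. size r = 2" and RE: "set_mset R \<subseteq> E"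
    and no_aug: "\<forall>T. set_mset T \<subseteq> E \<longrightarrow> size T = size R + 1 \<longrightarrow> \<not> sum_mset T \<subseteq># U"
    and no_eq: "\<forall>T. set_mset T \<subseteq> E \<longrightarrow> size T = size R \<longrightarrow> e \<in># T \<longrightarrow> sum_mset T \<noteq> sum_mset R"
  shows "set_mset S \<subseteq> E \<Longrightarrow> size S = size R \<Longrightarrow> sum_mset R \<union># sum_mset S \<subseteq># U \<Longrightarrow> e \<in># S \<Longrightarrow>
    \<exists>T u. set_mset T \<subseteq> E \<and> size T = size R \<and> e \<in># T \<and> sum_mset T - sum_mset R = {#u#} \<and>
      count (sum_mset R) u < count (sum_mset S) u"
proof (induction "size (sum_mset S - sum_mset R)" arbitrary: S rule: less_induct)
  case less
  note SE = less.prems(1) and size_S = less.prems(2)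
    and bound = less.prems(3) and eS = less.prems(4)
  have "size (sum_mset S) = size (sum_mset R)"
    using size_sum_mset_edges edges RE SE size_S by (metis subsetD)
  moreover have "sum_mset S \<noteq> sum_mset R" using no_eq SE size_S eS by blast
  ultimately obtain u where heavy: "count (sum_mset R) u < count (sum_mset S) u"
    using exists_count_less by blast
  have S2: "\<forall>r\<in>#S. size r = 2" using edges SE by auto
  have "count (sum_mset {#}) u < count (sum_mset S) u"
    using heavy by (simp only: sum_mset.empty count_empty)
  then obtain p where "add_mset {#u, p#} {#} \<subseteq># S"
    using edge_through_vertex[OF S2 empty_le] by blast
  moreover have "\<forall>T. set_mset T \<subseteq> E \<longrightarrow> size T = size R + 1 \<longrightarrow>
      \<not> sum_mset T \<subseteq># sum_mset R \<union># sum_mset S"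
    using no_aug bound subset_mset.order_trans by blast
  ultimately obtain A C z where walk: "A \<subseteq># S" "C \<subseteq># R" "size A = size C"
      "sum_mset A + {#z#} = sum_mset C + {#u#}" "count (sum_mset S) z < count (sum_mset R) z"
    using alternating_walk[OF edges RE SE _ heavy, of "{#{#u, p#}#}" "{#}" p] by auto
  have "u \<noteq> z" using heavy walk(5) by auto
  show ?case
  proof (cases "e \<in># A")
    case True
    let ?T = "R - C + A"
    have "size ?T = size R"
      using size_exchange[OF walk(2)] size_mset_mono[OF walk(2)] walk(3) by simp
    moreover have "set_mset ?T \<subseteq> E" using set_mset_exchange[OF walk(1)] RE SE by blast
    moreover have "sum_mset ?T - sum_mset R = {#u#}"
      using sum_mset_exchange[OF walk(2)] walk(4) diff_eq_singleton \<open>u \<noteq> z\<close> by metis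
    moreover have "e \<in># ?T" using True by simp
    ultimately show ?thesis using heavy by blast
  next
    case False
    let ?S' = "S - A + C"
    have moved: "sum_mset ?S' + {#u#} = sum_mset S + {#z#}"
      using sum_mset_exchange[OF walk(1)] walk(4) by metis
    have "size ?S' = size R"
      using size_exchange[OF walk(1)] size_mset_mono[OF walk(1)] walk(3) size_S by simp
    moreover have "set_mset ?S' \<subseteq> E" using set_mset_exchange[OF walk(2)] RE SE by blast
    moreover have "sum_mset R \<union># sum_mset ?S' \<subseteq># U"
      using move_excess_to_deficit(1)[OF moved heavy walk(5)] bound subset_mset.order_trans by blast
    moreover have "e \<in># ?S'" using eS False by (simp add: in_diff_count not_in_iff)
    moreover note less.hyps[OF move_excess_to_deficit(2)[OF moved heavy walk(5)]]
    ultimately obtain T u' where "set_mset T \<subseteq> E" "size T = size R" "e \<in># T"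
        "sum_mset T - sum_mset R = {#u'#}" "count (sum_mset R) u' < count (sum_mset ?S') u'"
      by blast
    then show ?thesis using move_excess_to_deficit(3)[OF moved heavy walk(5)] by blast
  qed
qed

section \<open>Generators of \<open>I\<^sup>n\<close> as products of edges\<close>

lemma image_msetE:
  assumes "set_mset T \<subseteq> f ` X"
  obtains A where "set_mset A \<subseteq> X" "image_mset f A = T"
proof
  show "set_mset (image_mset (inv_into X f) T) \<subseteq> X"
    using assms by (auto intro: inv_into_into)
  have "image_mset f (image_mset (inv_into X f) T) = image_mset id T"
    unfolding multiset.map_comp using assms by (intro image_mset_cong) (auto intro: f_inv_into_f)
  then show "image_mset f (image_mset (inv_into X f) T) = T" by simp
qed

definition edge_prod :: "'v multiset list \<Rightarrow> nat multiset \<Rightarrow> 'v multiset" where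
  "edge_prod L A = sum_mset (image_mset (\<lambda>i. L ! i) A)"

definition exponents :: "'v multiset list \<Rightarrow> nat multiset \<Rightarrow> nat list" where
  "exponents L A = map (count A) [0..<length L]"

lemma mingens_iff:
  "M \<in> mingens L n \<longleftrightarrow> (\<exists>A. set_mset A \<subseteq> {..<length L} \<and> size A = n \<and> M = edge_prod L A)"
  unfolding mingens_def edge_prod_def by blast

lemma finite_mingens: "finite (mingens L n)"
proof -
  have "mingens L n = edge_prod L ` multisets_of_size {..<length L} n"
    unfolding set_eq_iff mingens_iff multisets_of_size_def by blast
  then show ?thesis by auto
qed

lemma edge_prod_empty [simp]: "edge_prod L {#} = {#}"
  by (simp add: edge_prod_def)

lemma edge_prod_add_mset [simp]: "edge_prod L (add_mset i A) = L ! i + edge_prod L A"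
  by (simp add: edge_prod_def)

lemma edge_list_size: "edge_list L \<Longrightarrow> e \<in> set L \<Longrightarrow> size e = 2"
  unfolding edge_list_def by auto

lemma size_edge_prod:
  "edge_list L \<Longrightarrow> set_mset A \<subseteq> {..<length L} \<Longrightarrow> size (edge_prod L A) = 2 * size A"
  by (induction A) (auto simp: edge_list_size)

lemma edge_prod_eq_sum_repeat:
  "set_mset A \<subseteq> {..<length L} \<Longrightarrow>
    edge_prod L A = (\<Sum>i<length L. repeat_mset (count A i) (L ! i))"
proof (induction A)
  case empty then show ?case by (simp add: edge_prod_def)
next
  case (add x A)
  have "(\<Sum>i<length L. repeat_mset (count (add_mset x A) i) (L ! i))
      = (\<Sum>i<length L. repeat_mset (count A i) (L ! i) + (if i = x then L ! i else {#}))"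
    by (rule sum.cong) (auto simp: repeat_mset_distrib)
  also have "\<dots> = (\<Sum>i<length L. repeat_mset (count A i) (L ! i)) + L ! x"
    using add.prems by (simp add: sum.distrib sum.delta)
  finally show ?case using add by (simp add: add.commute)
qed

lemma exponents_in_exprs: "set_mset A \<subseteq> {..<length L} \<Longrightarrow> exponents L A \<in> exprs L (edge_prod L A)"
  unfolding exprs_def exponents_def using edge_prod_eq_sum_repeat[of A L] by (auto intro!: sum.cong)

lemma exprsE:
  assumes "a \<in> exprs L M"
  obtains A where "set_mset A \<subseteq> {..<length L}" "M = edge_prod L A" "a = exponents L A"
proof
  define A where "A = (\<Sum>i<length L. replicate_mset (a ! i) i)"
  have count_A: "count A t = (if t < length L then a ! t else 0)" for t
    unfolding A_def count_sum
    by (simp add: count_replicate_mset sum.delta' if_distrib cong: if_cong)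
  show A: "set_mset A \<subseteq> {..<length L}"
    by (auto simp: set_mset_def count_A split: if_splits)
  have length_a: "length a = length L" using assms unfolding exprs_def by simp
  show "a = exponents L A"
    unfolding exponents_def by (rule nth_equalityI) (auto simp: length_a count_A)
  show "M = edge_prod L A"
    using assms edge_prod_eq_sum_repeat[OF A] unfolding exprs_def
    by (auto simp: count_A intro!: sum.cong)
qed

lemma size_1_mset_eq: "size A = 1 \<Longrightarrow> i \<in># A \<Longrightarrow> A = {#i#}"
  by (drule size_1_singleton_mset) auto

lemma edge_of_single: "n = 1 \<Longrightarrow> distinct L \<Longrightarrow> i < length L \<Longrightarrow> edge_of L n (L ! i) = i"
  unfolding edge_of_def by (auto intro!: the_equality simp: nth_eq_iff_index_eq)

lemma edge_dvd_edge_prod: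
  assumes "set_mset A \<subseteq> {..<length L}" "size A = n" "i \<in># A"
  shows "edge_dvd L 1 (L ! i) n (edge_prod L A)"
proof -
  have "edge_prod L (A - {#i#}) \<in> mingens L (n - 1)"
    unfolding mingens_iff using assms
    by (intro exI[of _ "A - {#i#}"]) (auto dest: in_diffD simp: size_Diff_singleton)
  moreover have "edge_prod L A = L ! i + edge_prod L (A - {#i#})"
    using assms(3) by (metis edge_prod_add_mset insert_DiffM)
  ultimately show ?thesis unfolding edge_dvd_def by blast
qed

lemma edge_of_le:
  assumes L: "edge_list L" and "n \<ge> 1"
    and A: "set_mset A \<subseteq> {..<length L}" "size A = n" "i \<in># A"
  shows "edge_of L n (edge_prod L A) \<le> i"
proof (cases "n = 1")
  case True
  have "distinct L" using L unfolding edge_list_def by simp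
  moreover have "i < length L" using A by auto
  ultimately have "edge_of L n (L ! i) = i" by (rule edge_of_single[OF True])
  moreover have "A = {#i#}" using True A(2,3) size_1_mset_eq by simp
  ultimately show ?thesis by simp
next
  case False
  have "i < length L" using A by auto
  then show ?thesis
    using False edge_dvd_edge_prod[OF A] unfolding edge_of_def by (simp add: Least_le)
qed

lemma mingens_edge_ofE:
  assumes L: "edge_list L" and n: "n \<ge> 1" and M: "M \<in> mingens L n"
  obtains A where "set_mset A \<subseteq> {..<length L}" "size A = n" "M = edge_prod L A"
    "edge_of L n M \<in># A"
proof -
  obtain A0 where A0: "set_mset A0 \<subseteq> {..<length L}" "size A0 = n" "M = edge_prod L A0"
    using M unfolding mingens_iff by blast
  have "A0 \<noteq> {#}" using A0(2) n by auto
  then obtain i0 where i0: "i0 \<in># A0" by (rule multiset_nonemptyE)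
  define e where "e = edge_of L n M"
  show thesis
  proof (cases "n = 1")
    case True
    then have "A0 = {#i0#}" using A0(2) i0 size_1_mset_eq by simp
    then have "e = i0" using True A0 L edge_of_single unfolding e_def edge_list_def by auto
    then show thesis using that[OF A0(1,2,3)] i0 unfolding e_def by simp
  next
    case False
    let ?P = "\<lambda>i. i < length L \<and> edge_dvd L 1 (L ! i) n M"
    have "?P i0" using edge_dvd_edge_prod[OF A0(1,2) i0] A0 i0 by auto
    then have "?P (LEAST i. ?P i)" by (rule LeastI)
    then have "?P e" using False unfolding e_def edge_of_def by simp
    then obtain m3 where "m3 \<in> mingens L (n - 1)" "M = L ! e + m3"
      unfolding edge_dvd_def by auto
    moreover obtain A3 where "set_mset A3 \<subseteq> {..<length L}" "size A3 = n - 1" "m3 = edge_prod L A3"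
      using calculation(1) unfolding mingens_iff by blast
    ultimately show thesis
      using that[of "add_mset e A3"] n \<open>?P e\<close> unfolding e_def[symmetric] by simp
  qed
qed

lemma exprs_zero_before_edge_of:
  assumes L: "edge_list L" and "n \<ge> 1" and M: "M \<in> mingens L n"
    and a: "a \<in> exprs L M" and t: "t < edge_of L n M" "t < length a"
  shows "a ! t = 0"
proof (rule ccontr)
  assume "a ! t \<noteq> 0"
  obtain A where A: "set_mset A \<subseteq> {..<length L}" "M = edge_prod L A" "a = exponents L A"
    using exprsE[OF a] .
  obtain B where B: "set_mset B \<subseteq> {..<length L}" "size B = n" "M = edge_prod L B"
    using M unfolding mingens_iff by blast
  have "size A = n" using size_edge_prod[OF L A(1)] size_edge_prod[OF L B(1)] A(2) B(2,3) by simp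
  moreover have "t \<in># A"
    using \<open>a ! t \<noteq> 0\<close> t(2) A(3) by (simp add: exponents_def count_eq_zero_iff)
  ultimately have "edge_of L n M \<le> t" using edge_of_le[OF L \<open>n \<ge> 1\<close> A(1)] A(2) by simp
  with t(1) show False by simp
qed

lemma edge_indicesE:
  assumes L: "edge_list L" and T: "set_mset T \<subseteq> set L"
  obtains A where "set_mset A \<subseteq> {..<length L}" "size A = size T" "edge_prod L A = sum_mset T"
    "\<forall>i<length L. L ! i \<in># T \<longrightarrow> i \<in># A"
proof -
  have "set_mset T \<subseteq> (\<lambda>i. L ! i) ` {..<length L}"
    using T nth_image[of "length L" L] by (simp add: atLeast0LessThan)
  then obtain A where A: "set_mset A \<subseteq> {..<length L}" "image_mset (\<lambda>i. L ! i) A = T"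
    by (rule image_msetE)
  have "i \<in># A" if i: "i < length L" and iT: "L ! i \<in># T" for i
  proof -
    obtain j where "j \<in># A" "L ! j = L ! i" using iT A(2) by auto
    moreover have "distinct L" using L unfolding edge_list_def by simp
    ultimately show ?thesis using A(1) i nth_eq_iff_index_eq by fastforce
  qed
  moreover have "edge_prod L A = sum_mset T" using A(2) by (simp add: edge_prod_def)
  ultimately show thesis using that A by auto
qed

section \<open>The order on generators\<close>

lemma lex_gt_iff_less: "lex_gt a b \<longleftrightarrow> length a = length b \<and> b < (a :: nat list)"
  unfolding lex_gt_def list_less_def lexord_take_index_conv by auto

lemma less_if_zero_prefix:
  fixes X Y :: "nat list"
  assumes "length X = length Y" "i < length X" "0 < X ! i" "i < b"
    and zero: "\<forall>t<b. t < length Y \<longrightarrow> Y ! t = 0"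
  shows "Y < X"
proof -
  define m where "m = (LEAST t. t < length X \<and> 0 < X ! t)"
  have m: "m < length X" "0 < X ! m" "m \<le> i"
    using LeastI[of "\<lambda>t. t < length X \<and> 0 < X ! t" i] Least_le[of _ i] assms(2,3)
    unfolding m_def by auto
  have "X ! t = 0" if "t < m" for t
    using not_less_Least[OF that[unfolded m_def]] m(1) that by auto
  then have "take m Y = take m X"
    using assms(1,4) zero m by (intro nth_equalityI) auto
  moreover have "Y ! m = 0" using zero m assms(1,4) by auto
  ultimately show ?thesis
    using m assms(1) unfolding list_less_def lexord_take_index_conv by auto
qed

lemma finite_exprs:
  assumes L: "edge_list L"
  shows "finite (exprs L M)"
proof (rule finite_subset)
  show "exprs L M \<subseteq> {xs. set xs \<subseteq> {..size M} \<and> length xs = length L}"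
  proof
    fix a assume "a \<in> exprs L M"
    then obtain A where A: "set_mset A \<subseteq> {..<length L}" "M = edge_prod L A" "a = exponents L A"
      by (rule exprsE)
    have "count A i \<le> size M" for i
      using count_le_size[of A i] size_edge_prod[OF L A(1)] A(2) by simp
    then show "a \<in> {xs. set xs \<subseteq> {..size M} \<and> length xs = length L}"
      using A(3) by (auto simp: exponents_def)
  qed
qed (simp add: finite_lists_length_eq)

lemma exprs_nonempty:
  assumes "M \<in> mingens L n"
  shows "exprs L M \<noteq> {}"
proof -
  obtain A where "set_mset A \<subseteq> {..<length L}" "M = edge_prod L A"
    using assms unfolding mingens_iff by blast
  then have "exponents L A \<in> exprs L M" using exponents_in_exprs by simp
  then show ?thesis by auto
qed

lemma length_exprs: "a \<in> exprs L M \<Longrightarrow> length a = length L"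
  unfolding exprs_def by simp

lemma Max_exprs_in:
  assumes "edge_list L" "M \<in> mingens L n"
  shows "Max (exprs L M) \<in> exprs L M"
  by (rule Max_in[OF finite_exprs[OF assms(1)] exprs_nonempty[OF assms(2)]])

lemma maxexpr_eq_Max:
  assumes "edge_list L" "M \<in> mingens L n"
  shows "maxexpr L M = Max (exprs L M)"
  unfolding maxexpr_def
proof (rule the_equality)
  let ?m = "Max (exprs L M)"
  have m: "?m \<in> exprs L M" using Max_exprs_in[OF assms] .
  have ge: "b \<le> ?m" if "b \<in> exprs L M" for b
    by (rule Max_ge[OF finite_exprs[OF assms(1)] that])
  have len: "length b = length ?m" if "b \<in> exprs L M" for b
    using length_exprs[OF that] length_exprs[OF m] by simp
  show "?m \<in> exprs L M \<and> (\<forall>b\<in>exprs L M. b \<noteq> ?m \<longrightarrow> lex_gt ?m b)"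
  proof (intro conjI ballI impI)
    fix b assume b: "b \<in> exprs L M" and "b \<noteq> ?m"
    with ge[OF b] have "b < ?m" by simp
    then show "lex_gt ?m b" using len[OF b] by (simp add: lex_gt_iff_less)
  qed (rule m)
  fix a assume a: "a \<in> exprs L M \<and> (\<forall>b\<in>exprs L M. b \<noteq> a \<longrightarrow> lex_gt a b)"
  show "a = ?m"
  proof (rule ccontr)
    assume "a \<noteq> ?m"
    then have "lex_gt a ?m" using a m by simp
    then have "?m < a" by (simp add: lex_gt_iff_less)
    moreover have "a \<le> ?m" using ge a by simp
    ultimately show False by simp
  qed
qed

lemma gen_gt_iff_Max_less:
  assumes "edge_list L" "M \<in> mingens L n" "N \<in> mingens L n"
  shows "gen_gt L M N \<longleftrightarrow> Max (exprs L N) < Max (exprs L M)"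
proof -
  have "Max (exprs L M) \<in> exprs L M" "Max (exprs L N) \<in> exprs L N"
    using Max_exprs_in assms by blast+
  then have "length (Max (exprs L M)) = length (Max (exprs L N))" by (simp add: length_exprs)
  then show ?thesis using assms by (simp add: gen_gt_def maxexpr_eq_Max lex_gt_iff_less)
qed

lemma inj_on_Max_exprs:
  assumes "edge_list L"
  shows "inj_on (\<lambda>M. Max (exprs L M)) (mingens L n)"
proof (rule inj_onI)
  fix M N assume M: "M \<in> mingens L n" and N: "N \<in> mingens L n"
    and eq: "Max (exprs L M) = Max (exprs L N)"
  have "Max (exprs L M) \<in> exprs L M" using Max_exprs_in[OF assms M] .
  moreover have "Max (exprs L M) \<in> exprs L N" using Max_exprs_in[OF assms N] eq by simp
  ultimately show "M = N" unfolding exprs_def by auto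
qed

lemma gen_gt_if_earlier_edge:
  assumes L: "edge_list L" and n: "n \<ge> 1" and M: "M \<in> mingens L n"
    and A: "set_mset A \<subseteq> {..<length L}" "size A = n" "a \<in># A" and earlier: "a < edge_of L n M"
  shows "gen_gt L (edge_prod L A) M"
proof -
  have H: "edge_prod L A \<in> mingens L n" using A unfolding mingens_iff by blast
  have max_M: "Max (exprs L M) \<in> exprs L M" using Max_exprs_in[OF L M] .
  have "a < length L" using A by auto
  then have "Max (exprs L M) < exponents L A"
    using exprs_zero_before_edge_of[OF L n M max_M] A(3) earlier length_exprs[OF max_M]
    by (intro less_if_zero_prefix[of _ _ a "edge_of L n M"]) (simp_all add: exponents_def)
  also have "exponents L A \<le> Max (exprs L (edge_prod L A))"
    using Max_ge finite_exprs[OF L] exponents_in_exprs[OF A(1)] by blast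
  finally show ?thesis using gen_gt_iff_Max_less[OF L H M] by simp
qed

section \<open>Ranking the generators\<close>

lemma card_greater_less_card:
  fixes f :: "'a \<Rightarrow> 'b :: order"
  assumes "finite X" "x \<in> X"
  shows "card {y \<in> X. f x < f y} < card X"
proof (rule psubset_card_mono)
  show "{y \<in> X. f x < f y} \<subset> X" using assms(2) by force
qed (rule assms(1))

lemma card_greater_anti:
  fixes f :: "'a \<Rightarrow> 'b :: order"
  assumes "finite X" "y \<in> X" "f x < f y"
  shows "card {z \<in> X. f y < f z} < card {z \<in> X. f x < f z}"
  using assms by (intro psubset_card_mono) auto

lemma bij_betw_card_greater:
  fixes f :: "'a \<Rightarrow> 'b :: linorder"
  assumes fin: "finite X" and inj: "inj_on f X"
  shows "bij_betw (\<lambda>x. card {y \<in> X. f x < f y}) X {..<card X}"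
proof -
  let ?r = "\<lambda>x. card {y \<in> X. f x < f y}"
  have "inj_on ?r X"
  proof (rule inj_onI)
    fix x y assume x: "x \<in> X" and y: "y \<in> X" and eq: "?r x = ?r y"
    show "x = y"
    proof (rule ccontr)
      assume "x \<noteq> y"
      then have "f x < f y \<or> f y < f x" using inj x y by (metis inj_onD neqE)
      then show False
      proof
        assume "f x < f y"
        then have "?r y < ?r x" by (rule card_greater_anti[OF fin y])
        with eq show False by simp
      next
        assume "f y < f x"
        then have "?r x < ?r y" by (rule card_greater_anti[OF fin x])
        with eq show False by simp
      qed
    qed
  qed
  moreover have "?r ` X = {..<card X}"
  proof (rule card_subset_eq)
    show "?r ` X \<subseteq> {..<card X}" using card_greater_less_card[OF fin] by auto
    show "card (?r ` X) = card {..<card X}" using card_image[OF \<open>inj_on ?r X\<close>] by simp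
  qed simp
  ultimately show ?thesis unfolding bij_betw_def by blast
qed

definition gen_rank :: "'v multiset list \<Rightarrow> nat \<Rightarrow> 'v multiset \<Rightarrow> nat" where
  "gen_rank L n M = card {N \<in> mingens L n. gen_gt L N M}"

lemma gen_rank_eq:
  assumes "edge_list L" "M \<in> mingens L n"
  shows "gen_rank L n M = card {N \<in> mingens L n. Max (exprs L M) < Max (exprs L N)}"
  unfolding gen_rank_def
  by (intro arg_cong[where f = card] Collect_cong)
    (use gen_gt_iff_Max_less[OF assms(1) _ assms(2)] in blast)

lemma bij_betw_gen_rank:
  assumes "edge_list L"
  shows "bij_betw (gen_rank L n) (mingens L n) {..<card (mingens L n)}"
proof (rule bij_betw_cong[THEN iffD2])
  show "gen_rank L n M = card {N \<in> mingens L n. Max (exprs L M) < Max (exprs L N)}"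
    if "M \<in> mingens L n" for M
    by (rule gen_rank_eq[OF assms that])
qed (rule bij_betw_card_greater[OF finite_mingens inj_on_Max_exprs[OF assms]])

lemma gen_gen_rank:
  assumes L: "edge_list L" and H: "H \<in> mingens L n"
  shows "gen L n (gen_rank L n H + 1) = H"
  unfolding gen_def
proof (rule the_equality)
  show "H \<in> mingens L n \<and> card {N \<in> mingens L n. gen_gt L N H} = gen_rank L n H + 1 - 1"
    using H by (simp add: gen_rank_def)
  fix M assume "M \<in> mingens L n \<and> card {N \<in> mingens L n. gen_gt L N M} = gen_rank L n H + 1 - 1"
  then show "M = H"
    using bij_betw_imp_inj_on[OF bij_betw_gen_rank[OF L]] H
    unfolding gen_rank_def inj_on_def by auto
qed

lemma gen_in_mingens:
  assumes L: "edge_list L" and "1 \<le> t" "t \<le> card (mingens L n)"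
  shows "gen L n t \<in> mingens L n \<and> gen_rank L n (gen L n t) = t - 1"
proof -
  have "t - 1 \<in> gen_rank L n ` mingens L n"
    using bij_betw_imp_surj_on[OF bij_betw_gen_rank[OF L]] assms(2,3) by auto
  then obtain H where "H \<in> mingens L n" "gen_rank L n H = t - 1" by force
  moreover have "gen L n t = H"
    using gen_gen_rank[OF L \<open>H \<in> mingens L n\<close>] \<open>gen_rank L n H = t - 1\<close> assms(2) by simp
  ultimately show ?thesis by simp
qed

lemma gen_rank_less:
  assumes "edge_list L" "H \<in> mingens L n" "M \<in> mingens L n" "gen_gt L H M"
  shows "gen_rank L n H < gen_rank L n M"
  unfolding gen_rank_eq[OF assms(1,2)] gen_rank_eq[OF assms(1,3)]
  by (rule card_greater_anti[OF finite_mingens assms(2)])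
    (use gen_gt_iff_Max_less[OF assms(1,2,3)] assms(4) in simp)

section \<open>Colon ideals and the exchange of generators\<close>

lemma colon_principal: "colon (principal X) M = principal (X - M)"
  unfolding colon_def principal_def by (auto simp: subset_eq_diff_conv)

lemma colon_principal_subset_colon_powI:
  assumes "X \<union># M \<in> powI L m"
  shows "colon (principal X) M \<subseteq> colon (powI L m) M"
proof
  fix w assume "w \<in> colon (principal X) M"
  then have "X \<union># M \<subseteq># w + M" unfolding colon_def principal_def by simp
  moreover obtain g where "g \<in> mingens L m" "g \<subseteq># X \<union># M" using assms unfolding powI_def by blast
  ultimately show "w \<in> colon (powI L m) M"
    unfolding colon_def powI_def using subset_mset.order_trans by blast
qed

lemma exchange_generator:
  assumes L: "edge_list L" and n: "n \<ge> 1" and M: "M \<in> mingens L n" and N: "N \<in> mingens L n"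
    and lcm: "N \<union># M \<notin> powI L (n + 1)" and earlier: "edge_of L n N < edge_of L n M"
  shows "\<exists>H u. H \<in> mingens L n \<and> edge_of L n H \<le> edge_of L n N \<and> gen_gt L H M \<and>
    H - M = {#u#} \<and> u \<in># N - M"
proof -
  define a where "a = edge_of L n N"
  obtain AN where AN: "set_mset AN \<subseteq> {..<length L}" "size AN = n" "N = edge_prod L AN" "a \<in># AN"
    using mingens_edge_ofE[OF L n N] unfolding a_def by blast
  then have a: "a < length L" by auto
  obtain AM where AM: "set_mset AM \<subseteq> {..<length L}" "size AM = n" "M = edge_prod L AM"
    using M unfolding mingens_iff by blast
  define R where "R = image_mset (\<lambda>i. L ! i) AM"
  define S where "S = image_mset (\<lambda>i. L ! i) AN"
  have R: "set_mset R \<subseteq> set L" "size R = n" "sum_mset R = M"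
    using AM unfolding R_def by (auto simp: edge_prod_def)
  have S: "set_mset S \<subseteq> set L" "size S = n" "sum_mset S = N" "L ! a \<in># S"
    using AN unfolding S_def by (auto simp: edge_prod_def)
  have no_aug: "\<forall>T. set_mset T \<subseteq> set L \<longrightarrow> size T = size R + 1 \<longrightarrow> \<not> sum_mset T \<subseteq># N \<union># M"
  proof (intro allI impI notI)
    fix T assume T: "set_mset T \<subseteq> set L" "size T = size R + 1" "sum_mset T \<subseteq># N \<union># M"
    obtain A where "set_mset A \<subseteq> {..<length L}" "size A = size T" "edge_prod L A = sum_mset T"
      by (rule edge_indicesE[OF L T(1)])
    then have "sum_mset T \<in> mingens L (n + 1)"
      unfolding mingens_iff using T(2) R(2) by (intro exI[of _ A]) simp
    with T(3) lcm show False unfolding powI_def by blast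
  qed
  have no_eq: "\<forall>T. set_mset T \<subseteq> set L \<longrightarrow> size T = size R \<longrightarrow> L ! a \<in># T \<longrightarrow>
      sum_mset T \<noteq> sum_mset R"
  proof (intro allI impI notI)
    fix T assume T: "set_mset T \<subseteq> set L" "size T = size R" "L ! a \<in># T" "sum_mset T = sum_mset R"
    obtain A where A: "set_mset A \<subseteq> {..<length L}" "size A = size T" "edge_prod L A = sum_mset T"
        and index: "\<forall>i<length L. L ! i \<in># T \<longrightarrow> i \<in># A"
      by (rule edge_indicesE[OF L T(1)])
    have "size A = n" using A(2) T(2) R(2) by simp
    then have "edge_of L n (edge_prod L A) \<le> a" using edge_of_le[OF L n A(1)] index a T(3) by simp
    with earlier show False using A(3) T(4) R(3) unfolding a_def by simp
  qed
  have edges: "\<forall>r\<in>set L. size r = 2" using edge_list_size[OF L] by blast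
  have "size S = size R" using R(2) S(2) by simp
  moreover have "sum_mset R \<union># sum_mset S \<subseteq># N \<union># M" using R(3) S(3) by (simp add: sup_commute)
  ultimately obtain T u where T: "set_mset T \<subseteq> set L" "size T = size R" "L ! a \<in># T"
      "sum_mset T - sum_mset R = {#u#}" "count (sum_mset R) u < count (sum_mset S) u"
    using exchange_through_edge[OF edges R(1) no_aug no_eq S(1) _ _ S(4)] by blast
  obtain A where A: "set_mset A \<subseteq> {..<length L}" "size A = size T" "edge_prod L A = sum_mset T"
      and index: "\<forall>i<length L. L ! i \<in># T \<longrightarrow> i \<in># A"
    by (rule edge_indicesE[OF L T(1)])
  have "a \<in># A" using index a T(3) by blast
  have "size A = n" using A(2) T(2) R(2) by simp
  then have "edge_prod L A \<in> mingens L n" using A(1) unfolding mingens_iff by blast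
  moreover have "edge_of L n (edge_prod L A) \<le> a"
    using edge_of_le[OF L n A(1) \<open>size A = n\<close> \<open>a \<in># A\<close>] .
  moreover have "gen_gt L (edge_prod L A) M"
    using gen_gt_if_earlier_edge[OF L n M A(1) \<open>size A = n\<close> \<open>a \<in># A\<close>] earlier unfolding a_def .
  moreover have "edge_prod L A - M = {#u#}" using T(4) A(3) R(3) by simp
  moreover have "u \<in># N - M" using T(5) R(3) S(3) by (simp add: in_diff_count)
  ultimately show ?thesis unfolding a_def by blast
qed

theorem lemma4p11:
  fixes L :: "'v multiset list" and n k' j :: nat
  assumes "edge_list L"
    and "n \<ge> 1" and "k' \<ge> 1" and "1 \<le> j" and "j \<le> k'"
    and "k' + 1 \<le> card (mingens L n)"
    and "\<not> colon (principal (gen L n j)) (gen L n (k' + 1))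
            \<subseteq> colon (powI L (n + 1)) (gen L n (k' + 1))"
    and "edge_of L n (gen L n j) < edge_of L n (gen L n (k' + 1))"
  shows "\<exists>i. 1 \<le> i \<and> i \<le> k' \<and>
     (\<exists>x. colon (principal (gen L n i)) (gen L n (k' + 1)) = principal {#x#}) \<and>
     colon (principal (gen L n j)) (gen L n (k' + 1))
        \<subseteq> colon (principal (gen L n i)) (gen L n (k' + 1)) \<and>
     edge_of L n (gen L n i) \<le> edge_of L n (gen L n j)"
proof -
  define M N where "M = gen L n (k' + 1)" and "N = gen L n j"
  have M: "M \<in> mingens L n" "gen_rank L n M = k'"
    using gen_in_mingens[OF assms(1) _ assms(6)] unfolding M_def by auto
  have N: "N \<in> mingens L n"
    using gen_in_mingens[OF assms(1) assms(4)] assms(5,6) unfolding N_def by simp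
  have "N \<union># M \<notin> powI L (n + 1)"
    using colon_principal_subset_colon_powI assms(7) unfolding M_def N_def by blast
  then obtain H u where H: "H \<in> mingens L n" "edge_of L n H \<le> edge_of L n N" "gen_gt L H M"
      "H - M = {#u#}" "u \<in># N - M"
    using exchange_generator[OF assms(1,2) M(1) N] assms(8) unfolding M_def N_def by blast
  define i where "i = gen_rank L n H + 1"
  have "gen L n i = H" unfolding i_def by (rule gen_gen_rank[OF assms(1) H(1)])
  moreover have "1 \<le> i" "i \<le> k'"
    using gen_rank_less[OF assms(1) H(1) M(1) H(3)] M(2) unfolding i_def by auto
  moreover have "principal (N - M) \<subseteq> principal {#u#}"
    using H(5) unfolding principal_def by (auto intro: subset_mset.order_trans)
  ultimately show ?thesis
    using H(2,4) unfolding colon_principal M_def[symmetric] N_def[symmetric] by metis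
qed

end
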